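(* Let $G$ be a directed graph, let $a, b, k \geq 1$ be integers, and let $D$ be a well-linked set in $G$ of size $4(a+k)b$. If $G$ does not contain a family of $k$ directed cycles such that every vertex of $G$ is in at most two of the cycles, then there exist walks $P_1,\ldots,P_a$ in $G$ and sets $A_i, B_i \subseteq V(P_i)$ for $1 \leq i \leq a$ such that: (1) the family $\{P_1,\ldots,P_a\}$ is of congestion $2$; (2) the sets $A_1,B_1,\ldots,A_a,B_a$ each have size $b$ and are pairwise disjoint; (3) for every $1 \leq i \leq a$, all vertices of $A_i$ appear on $P_i$ before all vertices of $B_i$; (4) $\bigcup_{i=1}^a (A_i \cup B_i)$ is well-linked in $G$.
   Context: For $A,B\subseteq V(G)$ with $|A|=|B|$, a linkage from $A$ to $B$ is a set of $|A|$ pairwise vertex-disjoint directed paths each starting in $A$ and ending in $B$. A set $W\subseteq V(G)$ is well-linked if for all $A,B\subseteq W$ with $|A|=|B|$ there is a linkage from $A$ to $B$ in $G-(W\setminus(A\cup B))$. A family of walks is of congestion $c$ if every vertex is visited at most $c$ times in total by the walks (each visit counted separately). *)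

theory Defs
  imports Main
begin

definition digraph :: "'v set \<Rightarrow> ('v \<times> 'v) set \<Rightarrow> bool" where
  "digraph V E \<longleftrightarrow> finite V \<and> E \<subseteq> V \<times> V"

definition is_walk :: "'v set \<Rightarrow> ('v \<times> 'v) set \<Rightarrow> 'v list \<Rightarrow> bool" where
  "is_walk V E P \<longleftrightarrow> P \<noteq> [] \<and> set P \<subseteq> V \<and>
     (\<forall>i. Suc i < length P \<longrightarrow> (P ! i, P ! Suc i) \<in> E)"

definition is_path :: "'v set \<Rightarrow> ('v \<times> 'v) set \<Rightarrow> 'v list \<Rightarrow> bool" where
  "is_path V E P \<longleftrightarrow> is_walk V E P \<and> distinct P"

definition linkage_in :: "'v set \<Rightarrow> ('v \<times> 'v) set \<Rightarrow> 'v set \<Rightarrow> 'v set \<Rightarrow> 'v set \<Rightarrow> bool" where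
  "linkage_in V E X A B \<longleftrightarrow>
     (\<exists>Ps :: 'v list set. finite Ps \<and> card Ps = card A \<and>
        (\<forall>P\<in>Ps. is_path (V - X) E P \<and> hd P \<in> A \<and> last P \<in> B) \<and>
        (\<forall>P\<in>Ps. \<forall>Q\<in>Ps. P \<noteq> Q \<longrightarrow> set P \<inter> set Q = {}))"

definition well_linked :: "'v set \<Rightarrow> ('v \<times> 'v) set \<Rightarrow> 'v set \<Rightarrow> bool" where
  "well_linked V E W \<longleftrightarrow> W \<subseteq> V \<and>
     (\<forall>A B. A \<subseteq> W \<longrightarrow> B \<subseteq> W \<longrightarrow> card A = card B \<longrightarrow>
        linkage_in V E (W - (A \<union> B)) A B)"

(* A directed cycle, represented as its set of arcs: a cyclic sequence of
   pairwise distinct vertices v_0,...,v_{m-1} (m \<ge> 1) with arcs v_i -> v_{i+1 mod m}. *)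
definition is_cycle :: "('v \<times> 'v) set \<Rightarrow> ('v \<times> 'v) set \<Rightarrow> bool" where
  "is_cycle E C \<longleftrightarrow> (\<exists>cs. cs \<noteq> [] \<and> distinct cs \<and> C = set (zip cs (rotate1 cs)) \<and> C \<subseteq> E)"

definition cycle_verts :: "('v \<times> 'v) set \<Rightarrow> 'v set" where
  "cycle_verts C = fst ` C"

definition has_half_integral_cycle_packing :: "'v set \<Rightarrow> ('v \<times> 'v) set \<Rightarrow> nat \<Rightarrow> bool" where
  "has_half_integral_cycle_packing V E k \<longleftrightarrow>
     (\<exists>\<C>. finite \<C> \<and> card \<C> = k \<and> (\<forall>C\<in>\<C>. is_cycle E C) \<and>
        (\<forall>v\<in>V. card {C\<in>\<C>. v \<in> cycle_verts C} \<le> 2))"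

definition congestion_le :: "nat \<Rightarrow> (nat \<Rightarrow> 'v list) \<Rightarrow> nat \<Rightarrow> bool" where
  "congestion_le a P c \<longleftrightarrow> (\<forall>v. (\<Sum>i<a. count_list (P i) v) \<le> c)"

end

theory Submission
  imports Defs "HOL-Combinatorics.Orbits"
begin

(* Split D into two halves X and Y. Well-linkedness yields vertex-disjoint linkages X -> Y and
   Y -> X; together their paths route every z in D to h z, where h is a fixed-point-free
   permutation of D, and every vertex lies on at most two of the routes.  Following the routes
   around an orbit of h gives a closed walk, hence a directed cycle, and cycles coming from
   distinct orbits form a half-integral packing; so h has fewer than 2k orbits.  Cutting each
   orbit into segments of 2b consecutive points therefore leaves at least a segments, since
   4(a+k)b <= 2b (#segments + #orbits).  The walk P_i concatenates the routes along the i-th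
   segment; A_i and B_i are the first and the last b points of that segment.  Each route is
   used at most once, which bounds the congestion by 2. *)

lemma is_walk_Cons:
  "is_walk V E (x # ys) \<longleftrightarrow> x \<in> V \<and> (ys = [] \<or> (x, hd ys) \<in> E \<and> is_walk V E ys)"
  by (cases ys) (auto simp: is_walk_def nth_Cons less_Suc_eq_0_disj split: nat.splits)

lemma is_walk_butlast_append:
  assumes "is_walk V E p" "is_walk V E q" "last p = hd q"
  shows "is_walk V E (butlast p @ q)"
  using assms
proof (induction p rule: induct_list012)
  case (3 x y r)
  have "is_walk V E (butlast (y # r) @ q)" using 3 by (simp add: is_walk_Cons)
  moreover have "hd (butlast (y # r) @ q) = y" using 3(5) by (cases r) auto
  ultimately show ?case using 3(3) by (auto simp: is_walk_Cons)
qed (auto simp: is_walk_def)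

lemma walk_out_neighbour:
  assumes "is_walk V E p" "u \<in> set p" "u \<noteq> last p"
  shows "\<exists>w\<in>set p. (u, w) \<in> E"
proof -
  obtain n where n: "n < length p" "p ! n = u"
    using assms(2) by (meson in_set_conv_nth)
  moreover have "p \<noteq> []" using assms(2) by auto
  ultimately have "Suc n < length p"
    using assms(3) by (metis Suc_lessI diff_Suc_1 last_conv_nth)
  then show ?thesis
    using assms(1) n by (auto simp: is_walk_def)
qed

lemma count_list_butlast_le: "count_list (butlast xs) x \<le> count_list xs x"
  by (induction xs) auto

lemma distinct_count_list_le_1: "distinct xs \<Longrightarrow> count_list xs x \<le> 1"
  by (induction xs) auto

lemma is_cycle_of_list:
  assumes "cs \<noteq> []" "distinct cs" "\<forall>n<length cs. (cs ! n, cs ! (Suc n mod length cs)) \<in> E"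
  shows "is_cycle E (set (zip cs (rotate1 cs)))" "cycle_verts (set (zip cs (rotate1 cs))) = set cs"
proof -
  have "set (zip cs (rotate1 cs)) \<subseteq> E"
    using assms(3) by (auto simp: set_zip nth_rotate1)
  then show "is_cycle E (set (zip cs (rotate1 cs)))"
    using assms(1,2) unfolding is_cycle_def by blast
  have "map fst (zip cs (rotate1 cs)) = cs" by simp
  then show "cycle_verts (set (zip cs (rotate1 cs))) = set cs"
    unfolding cycle_verts_def by (metis set_map)
qed

lemma funpow_closed: "f ` S \<subseteq> S \<Longrightarrow> x \<in> S \<Longrightarrow> (f ^^ n) x \<in> S"
  by (induction n) auto

lemma orbit_subset_if_closed:
  assumes "f ` S \<subseteq> S" "x \<in> S"
  shows "orbit f x \<subseteq> S"
proof
  fix y assume "y \<in> orbit f x"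
  then show "y \<in> S" by induction (use assms in auto)
qed

lemma periodic_point_exists:
  assumes "finite S" "f ` S \<subseteq> S" "S \<noteq> {}"
  obtains y where "y \<in> S" "y \<in> orbit f y"
proof -
  obtain x where x: "x \<in> S" using assms(3) by blast
  have "(\<lambda>n. (f ^^ n) x) ` {..card S} \<subseteq> S"
    using funpow_closed[OF assms(2) x] by auto
  then have "card ((\<lambda>n. (f ^^ n) x) ` {..card S}) < card {..card S}"
    using card_mono[OF assms(1)] le_imp_less_Suc by (metis card_atMost)
  then have "\<not> inj_on (\<lambda>n. (f ^^ n) x) {..card S}"
    by (rule pigeonhole)
  then obtain i j where ij: "i < j" "(f ^^ i) x = (f ^^ j) x"
    unfolding inj_on_def by (metis linorder_neqE_nat)
  have "(f ^^ (j - i)) ((f ^^ i) x) = (f ^^ (j - i + i)) x"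
    by (simp add: funpow_add)
  also have "\<dots> = (f ^^ i) x"
    using ij by simp
  finally have "(f ^^ i) x \<in> orbit f ((f ^^ i) x)"
    unfolding orbit_altdef using ij(1) by (metis (mono_tags) mem_Collect_eq zero_less_diff)
  then show thesis
    using that funpow_closed[OF assms(2) x] by blast
qed

lemma cycle_of_orbit:
  assumes y: "y \<in> orbit s y" and arcs: "\<forall>u\<in>orbit s y. (u, s u) \<in> E"
  shows "\<exists>C. is_cycle E C \<and> cycle_verts C = orbit s y"
proof -
  define p where "p = funpow_dist1 s y y"
  define cs where "cs = map (\<lambda>n. (s ^^ n) y) [0..<p]"
  have period: "(s ^^ p) y = y"
    unfolding p_def by (rule funpow_dist1_prop[OF y])
  have "set cs = orbit s y"
    by (simp only: cs_def p_def set_map set_upt orbit_conv_funpow_dist1[OF y])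
  moreover have "distinct cs"
    using inj_on_funpow_dist1[OF y] unfolding cs_def distinct_map p_def by (simp del: upt_Suc)
  moreover have "\<forall>n<length cs. (cs ! n, cs ! (Suc n mod length cs)) \<in> E"
  proof (intro allI impI)
    fix n assume "n < length cs"
    moreover have "(s ^^ (Suc n mod p)) y = s ((s ^^ n) y)"
      using funpow_mod_eq[OF period] by simp
    ultimately show "(cs ! n, cs ! (Suc n mod length cs)) \<in> E"
      using arcs funpow_in_orbit[OF y] by (simp add: cs_def)
  qed
  moreover have "cs \<noteq> []" by (simp add: cs_def p_def)
  ultimately show ?thesis
    using is_cycle_of_list[of cs E] by metis
qed

lemma cycle_in_out_closed_set:
  assumes "finite U" "U \<noteq> {}" "\<forall>u\<in>U. \<exists>w\<in>U. (u, w) \<in> E"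
  shows "\<exists>C. is_cycle E C \<and> cycle_verts C \<subseteq> U"
proof -
  obtain s where s: "\<forall>u\<in>U. s u \<in> U \<and> (u, s u) \<in> E"
    using assms(3) by metis
  then have sU: "s ` U \<subseteq> U" by auto
  obtain y where y: "y \<in> U" "y \<in> orbit s y"
    using periodic_point_exists[OF assms(1) sU assms(2)] .
  have "orbit s y \<subseteq> U"
    using orbit_subset_if_closed[OF sU y(1)] .
  then show ?thesis
    using cycle_of_orbit[OF y(2)] s by (metis subsetD subset_refl)
qed

lemma cycle_verts_nonempty: "is_cycle E C \<Longrightarrow> cycle_verts C \<noteq> {}"
  unfolding is_cycle_def cycle_verts_def by (auto simp: neq_Nil_conv)

lemma card_le_mult_card_image:
  assumes "finite J" "\<forall>c\<in>f ` J. card {j\<in>J. f j = c} \<le> m"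
  shows "card J \<le> m * card (f ` J)"
proof -
  have "J = (\<Union>c\<in>f ` J. {j\<in>J. f j = c})" by auto
  then have "card J \<le> (\<Sum>c\<in>f ` J. card {j\<in>J. f j = c})"
    using card_UN_le[of "f ` J" "\<lambda>c. {j\<in>J. f j = c}"] assms(1) by simp
  also have "\<dots> \<le> (\<Sum>c\<in>f ` J. m)"
    using assms(2) by (intro sum_mono) blast
  also have "\<dots> = m * card (f ` J)" by simp
  finally show ?thesis .
qed

lemma has_half_integral_cycle_packingI:
  assumes "finite J" "2 * k \<le> card J"
    and cycles: "\<forall>j\<in>J. \<exists>C. is_cycle E C \<and> cycle_verts C \<subseteq> U j"
    and load: "\<forall>v. card {j\<in>J. v \<in> U j} \<le> 2"
  shows "has_half_integral_cycle_packing V E k"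
proof -
  obtain C where C: "\<forall>j\<in>J. is_cycle E (C j) \<and> cycle_verts (C j) \<subseteq> U j"
    using cycles by metis
  have "card {j\<in>J. C j = c} \<le> 2" if c: "c \<in> C ` J" for c
  proof -
    obtain v where "v \<in> cycle_verts c"
      using c C cycle_verts_nonempty by blast
    then have "{j\<in>J. C j = c} \<subseteq> {j\<in>J. v \<in> U j}"
      using C by auto
    then have "card {j\<in>J. C j = c} \<le> card {j\<in>J. v \<in> U j}"
      by (rule card_mono[rotated]) (use assms(1) in simp)
    also have "\<dots> \<le> 2" using load by blast
    finally show ?thesis .
  qed
  then have "card J \<le> 2 * card (C ` J)"
    using assms(1) by (intro card_le_mult_card_image) auto
  then have "k \<le> card (C ` J)" using assms(2) by linarith
  then obtain CC where CC: "CC \<subseteq> C ` J" "card CC = k"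
    by (meson obtain_subset_with_card_n)
  have "card {c\<in>CC. v \<in> cycle_verts c} \<le> 2" for v
  proof -
    have "{c\<in>CC. v \<in> cycle_verts c} \<subseteq> C ` {j\<in>J. v \<in> U j}"
      using CC(1) C by fastforce
    then have "card {c\<in>CC. v \<in> cycle_verts c} \<le> card (C ` {j\<in>J. v \<in> U j})"
      by (rule card_mono[rotated]) (use assms(1) in simp)
    also have "\<dots> \<le> card {j\<in>J. v \<in> U j}"
      by (rule card_image_le) (use assms(1) in simp)
    also have "\<dots> \<le> 2" using load by blast
    finally show ?thesis .
  qed
  moreover have "finite CC" using CC(1) assms(1) finite_subset by blast
  ultimately show ?thesis
    unfolding has_half_integral_cycle_packing_def using CC C by blast
qed

section \<open>Segments of the orbits of a permutation\<close>

lemma block_index_less: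
  fixes j t L p :: nat
  assumes "j < p div L" "t < L"
  shows "j * L + t < p"
proof -
  have "j * L + t < Suc j * L" using assms(2) by simp
  also have "\<dots> \<le> p div L * L" using assms(1) by (intro mult_le_mono1) simp
  also have "\<dots> \<le> p" by simp
  finally show ?thesis .
qed

lemma orbit_blocks:
  assumes x: "x \<in> orbit h x" and "0 < L"
  defines "p \<equiv> funpow_dist1 h x x"
  defines "B \<equiv> (\<lambda>j. (h ^^ (j * L)) x) ` {..<p div L}"
  shows "inj_on (\<lambda>(y, t). (h ^^ t) y) (B \<times> {..<L})" "card B = p div L" "B \<subseteq> orbit h x"
proof -
  have inj: "inj_on (\<lambda>n. (h ^^ n) x) {..<p}"
    using inj_on_funpow_dist1[OF x] by (simp add: p_def atLeast0LessThan)
  have blocks: "inj_on (\<lambda>(j, t). (h ^^ (j * L + t)) x) ({..<p div L} \<times> {..<L})"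
  proof (rule inj_onI, clarify)
    fix j t j' t'
    assume jt: "j < p div L" "t < L" "j' < p div L" "t' < L"
      and "(h ^^ (j * L + t)) x = (h ^^ (j' * L + t')) x"
    then have "j * L + t = j' * L + t'"
      using inj_onD[OF inj] block_index_less by blast
    then have "(j * L + t) div L = (j' * L + t') div L" "(j * L + t) mod L = (j' * L + t') mod L"
      by simp_all
    then show "j = j' \<and> t = t'" using jt \<open>0 < L\<close> by simp
  qed
  have "B \<times> {..<L} = map_prod (\<lambda>j. (h ^^ (j * L)) x) id ` ({..<p div L} \<times> {..<L})"
    by (simp add: B_def map_prod_surj_on)
  moreover have "(\<lambda>(y, t). (h ^^ t) y) \<circ> map_prod (\<lambda>j. (h ^^ (j * L)) x) id
      = (\<lambda>(j, t). (h ^^ (j * L + t)) x)"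
    by (auto simp: fun_eq_iff funpow_add add.commute)
  ultimately show "inj_on (\<lambda>(y, t). (h ^^ t) y) (B \<times> {..<L})"
    using blocks inj_on_imageI by metis
  have "inj_on (\<lambda>j. (h ^^ (j * L)) x) {..<p div L}"
  proof (rule inj_onI)
    fix j j' assume "j \<in> {..<p div L}" "j' \<in> {..<p div L}" "(h ^^ (j * L)) x = (h ^^ (j' * L)) x"
    then show "j = j'" using inj_onD[OF blocks, of "(j, 0)" "(j', 0)"] \<open>0 < L\<close> by simp
  qed
  then show "card B = p div L" by (simp add: B_def card_image)
  show "B \<subseteq> orbit h x" using funpow_in_orbit[OF x] by (auto simp: B_def)
qed

lemma permutation_orbit_split:
  assumes "permutation h" "finite S" "h ` S \<subseteq> S" "x \<in> S"
  shows "orbit h x \<subseteq> S" "h ` (S - orbit h x) \<subseteq> S - orbit h x"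
    "card S = card (S - orbit h x) + funpow_dist1 h x x"
    "card (orbit h ` S) = card (orbit h ` (S - orbit h x)) + 1"
proof -
  have self_in: "y \<in> orbit h y" for y
    using assms(1) by (rule permutation_self_in_orbit)
  have cyclic: "cyclic_on h (orbit h x)"
    using assms(1) by (rule cyclic_on_orbit')
  show sub: "orbit h x \<subseteq> S"
    using assms(3,4) by (rule orbit_subset_if_closed)
  obtain D where "h permutes D"
    using assms(1) permutation_permutes by blast
  then show "h ` (S - orbit h x) \<subseteq> S - orbit h x"
    using assms(3) cyclic_on_f_in[OF _ cyclic] by blast
  have "card (orbit h x) = funpow_dist1 h x x"
    using orbit_conv_funpow_dist1[OF self_in] inj_on_funpow_dist1[OF self_in]
    by (simp add: card_image)
  then show "card S = card (S - orbit h x) + funpow_dist1 h x x"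
    using card_Diff_subset[OF finite_subset[OF sub assms(2)] sub] card_mono[OF assms(2) sub]
    by simp
  have "orbit h ` S = insert (orbit h x) (orbit h ` (S - orbit h x))"
    using sub assms(4) orbit_cyclic_eq3[OF cyclic] by auto
  moreover have "orbit h x \<notin> orbit h ` (S - orbit h x)"
    using self_in by auto
  ultimately show "card (orbit h ` S) = card (orbit h ` (S - orbit h x)) + 1"
    using assms(2) by simp
qed

lemma permutation_orbit_segments:
  assumes perm: "permutation h" and "finite S" "h ` S \<subseteq> S" "0 < L"
  shows "\<exists>X\<subseteq>S. inj_on (\<lambda>(x, t). (h ^^ t) x) (X \<times> {..<L}) \<and>
           card S \<le> (card X + card (orbit h ` S)) * L"
  using assms(2,3)
proof (induction "card S" arbitrary: S rule: less_induct)
  case less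
  show ?case
  proof (cases "S = {}")
    case True
    then show ?thesis by auto
  next
    case False
    then obtain x where x: "x \<in> S" by blast
    define S' where "S' = S - orbit h x"
    define p where "p = funpow_dist1 h x x"
    note split = permutation_orbit_split[OF perm less.prems x, folded S'_def p_def]
    have "card S' < card S" using split(3) by (simp add: p_def)
    then obtain X' where X': "X' \<subseteq> S'" "inj_on (\<lambda>(x, t). (h ^^ t) x) (X' \<times> {..<L})"
        "card S' \<le> (card X' + card (orbit h ` S')) * L"
      using less.hyps[of S'] less.prems(1) split(2) by (auto simp: S'_def)
    \<comment> \<open>The orbit of \<open>x\<close> contributes \<open>p div L\<close> segments and a remainder of fewer than \<open>L\<close> points.\<close>
    define B where "B = (\<lambda>j. (h ^^ (j * L)) x) ` {..<p div L}"
    have B: "inj_on (\<lambda>(y, t). (h ^^ t) y) (B \<times> {..<L})" "card B = p div L" "B \<subseteq> orbit h x"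
      using orbit_blocks[OF permutation_self_in_orbit[OF perm] \<open>0 < L\<close>] by (simp_all add: B_def p_def)
    have "(\<lambda>(x, t). (h ^^ t) x) ` (X' \<times> {..<L}) \<subseteq> S'"
      using funpow_closed[OF split(2)] X'(1) by (auto simp: S'_def)
    moreover have "(\<lambda>(y, t). (h ^^ t) y) ` (B \<times> {..<L}) \<subseteq> orbit h x"
      using B(3) funpow_in_orbit by fastforce
    ultimately have "(\<lambda>(x, t). (h ^^ t) x) ` (X' \<times> {..<L}) \<inter> (\<lambda>(x, t). (h ^^ t) x) ` (B \<times> {..<L}) = {}"
      unfolding S'_def by blast
    then have "inj_on (\<lambda>(x, t). (h ^^ t) x) ((X' \<union> B) \<times> {..<L})"
      unfolding Sigma_Un_distrib1 inj_on_Un using X'(2) B(1) by blast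
    moreover have "card S \<le> (card (X' \<union> B) + card (orbit h ` S)) * L"
    proof -
      have "finite X'" "finite B" "X' \<inter> B = {}"
        using X'(1) B(3) split(1) less.prems(1) by (auto simp: S'_def intro: finite_subset)
      then have card_XB: "card (X' \<union> B) = card X' + p div L"
        using B(2) by (simp add: card_Un_disjoint)
      have "p < L + p div L * L"
        using \<open>0 < L\<close> by (rule dividend_less_div_times)
      then have "card S \<le> (card X' + card (orbit h ` S')) * L + (p div L + 1) * L"
        using split(3) X'(3) by (simp add: p_def S'_def)
      then show ?thesis
        using card_XB split(4) by (simp add: S'_def algebra_simps)
    qed
    moreover have "X' \<union> B \<subseteq> S" using X'(1) B(3) split(1) by (auto simp: S'_def)
    ultimately show ?thesis by blast
  qed
qed

lemma permutes_orbit_segments: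
  assumes "h permutes D" "finite D" "0 < L"
  obtains c xs where "\<forall>i<c. xs i \<in> D" "inj_on (\<lambda>(i, t). (h ^^ t) (xs i)) ({..<c} \<times> {..<L})"
    "card D \<le> (c + card (orbit h ` D)) * L"
proof -
  have "permutation h" using assms(1,2) permutation_permutes by blast
  then obtain X where X: "X \<subseteq> D" "inj_on (\<lambda>(x, t). (h ^^ t) x) (X \<times> {..<L})"
      "card D \<le> (card X + card (orbit h ` D)) * L"
    using permutation_orbit_segments[OF _ assms(2) _ assms(3)] permutes_image[OF assms(1)] by blast
  obtain xs where xs: "bij_betw xs {..<card X} X"
    using ex_bij_betw_nat_finite[of X] finite_subset[OF X(1) assms(2)] by (auto simp: atLeast0LessThan)
  have "map_prod xs id ` ({..<card X} \<times> {..<L}) = X \<times> {..<L}"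
    using xs by (simp add: bij_betw_def map_prod_surj_on)
  moreover have "inj_on (map_prod xs id) ({..<card X} \<times> {..<L})"
    using xs by (simp add: bij_betw_def map_prod_inj_on)
  ultimately have "inj_on ((\<lambda>(x, t). (h ^^ t) x) \<circ> map_prod xs id) ({..<card X} \<times> {..<L})"
    using X(2) by (simp add: comp_inj_on)
  then have "inj_on (\<lambda>(i, t). (h ^^ t) (xs i)) ({..<card X} \<times> {..<L})"
    by (simp add: comp_def case_prod_unfold)
  moreover have "\<forall>i<card X. xs i \<in> D" using xs X(1) by (auto dest: bij_betwE)
  ultimately show thesis using that X(3) by blast
qed

lemma segment_halves:
  fixes f :: "nat \<Rightarrow> nat \<Rightarrow> 'a"
  assumes inj: "inj_on (\<lambda>(i, t). f i t) ({..<a} \<times> {..<2 * b})" and "i < a" "j < a"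
  shows "card (f i ` {..<b}) = b" "card (f i ` {b..<2 * b}) = b"
    "f i ` {..<b} \<inter> f j ` {b..<2 * b} = {}"
    "i \<noteq> j \<Longrightarrow> f i ` {..<b} \<inter> f j ` {..<b} = {}"
    "i \<noteq> j \<Longrightarrow> f i ` {b..<2 * b} \<inter> f j ` {b..<2 * b} = {}"
proof -
  have eq: "i' = j' \<and> t = t'" if "i' < a" "j' < a" "t < 2 * b" "t' < 2 * b" "f i' t = f j' t'"
    for i' j' t t'
    using inj_onD[OF inj, of "(i', t)" "(j', t')"] that by simp
  have "inj_on (f i) {..<2 * b}" using eq \<open>i < a\<close> by (intro inj_onI) blast
  then have "inj_on (f i) {..<b}" "inj_on (f i) {b..<2 * b}" by (auto intro: inj_on_subset)
  then show "card (f i ` {..<b}) = b" "card (f i ` {b..<2 * b}) = b" by (simp_all add: card_image)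
  have disj: "f i ` T \<inter> f j ` T' = {}"
    if "T \<subseteq> {..<2 * b}" "T' \<subseteq> {..<2 * b}" "{i} \<times> T \<inter> {j} \<times> T' = {}" for T T'
  proof -
    have "f i ` T \<inter> f j ` T' = (\<lambda>(i, t). f i t) ` ({i} \<times> T) \<inter> (\<lambda>(i, t). f i t) ` ({j} \<times> T')"
      by auto
    also have "\<dots> = (\<lambda>(i, t). f i t) ` ({i} \<times> T \<inter> {j} \<times> T')"
      by (rule inj_on_image_Int[OF inj, symmetric]) (use that assms(2,3) in auto)
    finally show ?thesis using that(3) by simp
  qed
  show "f i ` {..<b} \<inter> f j ` {b..<2 * b} = {}" by (rule disj) auto
  show "f i ` {..<b} \<inter> f j ` {..<b} = {}" if "i \<noteq> j" by (rule disj) (use that in auto)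
  show "f i ` {b..<2 * b} \<inter> f j ` {b..<2 * b} = {}" if "i \<noteq> j" by (rule disj) (use that in auto)
qed

lemma linkage_in_paths:
  assumes "linkage_in V E Z A B" "finite A" "finite B" "card A = card B"
  obtains p where "\<forall>x\<in>A. is_path (V - Z) E (p x) \<and> hd (p x) = x"
    "\<forall>x\<in>A. \<forall>y\<in>A. x \<noteq> y \<longrightarrow> set (p x) \<inter> set (p y) = {}"
    "bij_betw (\<lambda>x. last (p x)) A B"
proof -
  obtain Ps where Ps: "finite Ps" "card Ps = card A"
    "\<forall>P\<in>Ps. is_path (V - Z) E P \<and> hd P \<in> A \<and> last P \<in> B"
    "\<forall>P\<in>Ps. \<forall>Q\<in>Ps. P \<noteq> Q \<longrightarrow> set P \<inter> set Q = {}"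
    using assms(1) unfolding linkage_in_def by blast
  have ne: "P \<noteq> []" if "P \<in> Ps" for P
    using Ps(3) that by (auto simp: is_path_def is_walk_def)
  have inj_hd: "inj_on hd Ps"
  proof (rule inj_onI, rule ccontr)
    fix P Q assume "P \<in> Ps" "Q \<in> Ps" "hd P = hd Q" "P \<noteq> Q"
    then show False using Ps(4) ne hd_in_set by (metis disjoint_iff)
  qed
  have inj_last: "inj_on last Ps"
  proof (rule inj_onI, rule ccontr)
    fix P Q assume "P \<in> Ps" "Q \<in> Ps" "last P = last Q" "P \<noteq> Q"
    then show False using Ps(4) ne last_in_set by (metis disjoint_iff)
  qed
  have "hd ` Ps = A"
    by (rule card_subset_eq[OF assms(2)]) (use Ps(2,3) card_image[OF inj_hd] in auto)
  then have hd_bij: "bij_betw hd Ps A" using inj_hd by (simp add: bij_betw_def)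
  have "last ` Ps = B"
    by (rule card_subset_eq[OF assms(3)]) (use Ps(2,3) card_image[OF inj_last] assms(4) in auto)
  then have last_bij: "bij_betw last Ps B" using inj_last by (simp add: bij_betw_def)
  define p where "p = inv_into Ps hd"
  have p_bij: "bij_betw p A Ps" unfolding p_def by (rule bij_betw_inv_into[OF hd_bij])
  have p_hd: "hd (p x) = x" if "x \<in> A" for x
    using hd_bij that by (simp add: p_def bij_betw_def f_inv_into_f)
  have "bij_betw (\<lambda>x. last (p x)) A B"
    using bij_betw_trans[OF p_bij last_bij] by (simp add: comp_def)
  moreover have "\<forall>x\<in>A. \<forall>y\<in>A. x \<noteq> y \<longrightarrow> set (p x) \<inter> set (p y) = {}"
    using Ps(4) p_bij p_hd by (metis bij_betwE)
  moreover have "\<forall>x\<in>A. is_path (V - Z) E (p x) \<and> hd (p x) = x"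
    using Ps(3) p_bij p_hd by (auto dest: bij_betwE)
  ultimately show thesis using that by blast
qed

lemma well_linked_subset:
  assumes "well_linked V E D" "W \<subseteq> D"
  shows "well_linked V E W"
  unfolding well_linked_def
proof (intro conjI allI impI)
  show "W \<subseteq> V" using assms unfolding well_linked_def by auto
  fix A B assume "A \<subseteq> W" "B \<subseteq> W" "card A = card B"
  then have "linkage_in V E (D - (A \<union> B)) A B"
    using assms unfolding well_linked_def by auto
  moreover have "is_path (V - (W - (A \<union> B))) E P" if "is_path (V - (D - (A \<union> B))) E P" for P
    using that assms(2) by (auto simp: is_path_def is_walk_def)
  ultimately show "linkage_in V E (W - (A \<union> B)) A B"
    unfolding linkage_in_def by metis
qed

lemma card_disjoint_sets_containing_le_1:
  assumes "finite A" "\<forall>x\<in>A. \<forall>y\<in>A. x \<noteq> y \<longrightarrow> set (p x) \<inter> set (p y) = {}"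
  shows "card {x\<in>A. v \<in> set (p x)} \<le> 1"
  unfolding One_nat_def using assms by (subst card_le_Suc0_iff_eq) auto

section \<open>Routing along a permutation\<close>

locale path_routing =
  fixes V :: "'v set" and E :: "('v \<times> 'v) set" and D :: "'v set"
    and route :: "'v \<Rightarrow> 'v list" and h :: "'v \<Rightarrow> 'v"
  assumes finite_D: "finite D"
    and h_permutes: "h permutes D"
    and path_route: "z \<in> D \<Longrightarrow> is_path V E (route z)"
    and hd_route: "z \<in> D \<Longrightarrow> hd (route z) = z"
    and last_route: "z \<in> D \<Longrightarrow> last (route z) = h z"
    and h_no_fixpoint: "z \<in> D \<Longrightarrow> h z \<noteq> z"
begin

lemma h_in_D: "z \<in> D \<Longrightarrow> h z \<in> D"
  using h_permutes by (simp add: permutes_in_image)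

lemma funpow_h_in_D: "z \<in> D \<Longrightarrow> (h ^^ n) z \<in> D"
  using funpow_closed[of h D] h_in_D by blast

lemma walk_route: "z \<in> D \<Longrightarrow> is_walk V E (route z)"
  using path_route by (simp add: is_path_def)

lemma count_list_route_le_1: "z \<in> D \<Longrightarrow> count_list (route z) v \<le> 1"
  using path_route unfolding is_path_def by (blast intro: distinct_count_list_le_1)

lemma butlast_route_Cons: "z \<in> D \<Longrightarrow> \<exists>r. butlast (route z) = z # r"
proof -
  assume z: "z \<in> D"
  obtain r where r: "route z = z # r"
    using walk_route[OF z] hd_route[OF z] by (cases "route z") (auto simp: is_walk_def)
  then have "r \<noteq> []" using last_route[OF z] h_no_fixpoint[OF z] by auto
  then show ?thesis using r by simp
qed

lemma hd_in_butlast_route: "z \<in> D \<Longrightarrow> z \<in> set (butlast (route z))"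
  using butlast_route_Cons by force

fun trail :: "'v \<Rightarrow> nat \<Rightarrow> 'v list" where
  "trail x 0 = [x]"
| "trail x (Suc n) = butlast (route x) @ trail (h x) n"

lemma hd_trail: "x \<in> D \<Longrightarrow> hd (trail x n) = x"
  by (cases n) (auto dest: butlast_route_Cons)

lemma walk_trail: "x \<in> D \<Longrightarrow> is_walk V E (trail x n)"
proof (induction n arbitrary: x)
  case 0
  then show ?case
    using walk_route[OF 0] hd_in_butlast_route[OF 0] by (auto simp: is_walk_def dest: in_set_butlastD)
next
  case (Suc n)
  have "h x \<in> D" using Suc.prems by (rule h_in_D)
  then show ?case
    using is_walk_butlast_append[OF walk_route[OF Suc.prems] Suc.IH] last_route[OF Suc.prems]
      hd_trail by simp
qed

lemma funpow_in_trail: "x \<in> D \<Longrightarrow> t \<le> n \<Longrightarrow> (h ^^ t) x \<in> set (trail x n)"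
proof (induction n arbitrary: x t)
  case (Suc n)
  then show ?case
    using hd_in_butlast_route h_in_D by (cases t) (auto simp: funpow_swap1)
qed simp

lemma trail_add:
  "x \<in> D \<Longrightarrow> \<exists>pre. trail x (m + n) = pre @ trail ((h ^^ m) x) n \<and> (\<forall>t<m. (h ^^ t) x \<in> set pre)"
proof (induction m arbitrary: x)
  case (Suc m)
  then obtain pre where "trail (h x) (m + n) = pre @ trail ((h ^^ m) (h x)) n"
      "\<forall>t<m. (h ^^ t) (h x) \<in> set pre"
    using h_in_D by blast
  then show ?case
    using hd_in_butlast_route[OF Suc.prems]
    by (intro exI[of _ "butlast (route x) @ pre"]) (auto simp: funpow_swap1 less_Suc_eq_0_disj)
qed simp

lemma trail_split:
  assumes "x \<in> D"
  shows "\<exists>k. (\<lambda>t. (h ^^ t) x) ` {..<m} \<subseteq> set (take k (trail x (m + n))) \<and>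
             (\<lambda>t. (h ^^ t) x) ` {m..m + n} \<subseteq> set (drop k (trail x (m + n)))"
proof -
  obtain pre where pre: "trail x (m + n) = pre @ trail ((h ^^ m) x) n" "\<forall>t<m. (h ^^ t) x \<in> set pre"
    using trail_add[OF assms] by blast
  have "(h ^^ t) x \<in> set (trail ((h ^^ m) x) n)" if "m \<le> t" "t \<le> m + n" for t
  proof -
    have "(h ^^ (t - m)) ((h ^^ m) x) \<in> set (trail ((h ^^ m) x) n)"
      using that funpow_h_in_D[OF assms] by (intro funpow_in_trail) auto
    moreover have "(h ^^ (t - m)) ((h ^^ m) x) = (h ^^ (t - m + m)) x"
      by (simp add: funpow_add)
    ultimately show ?thesis using that(1) by simp
  qed
  then show ?thesis
    using pre by (intro exI[of _ "length pre"]) (simp add: image_subset_iff)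
qed

lemma count_list_trail:
  "x \<in> D \<Longrightarrow> count_list (trail x (Suc n)) v \<le> (\<Sum>t<Suc n. count_list (route ((h ^^ t) x)) v)"
proof (induction n arbitrary: x)
  case 0
  then have "trail x (Suc 0) = route x"
    using last_route[OF 0] walk_route[OF 0] append_butlast_last_id[of "route x"]
    by (simp add: is_walk_def)
  then show ?case by simp
next
  case (Suc n)
  have "count_list (butlast (route x)) v \<le> count_list (route x) v"
    by (rule count_list_butlast_le)
  then show ?case
    using Suc.IH[OF h_in_D[OF Suc.prems]]
    by (simp add: sum.lessThan_Suc_shift[of _ "Suc n"] funpow_swap1 del: sum.lessThan_Suc)
qed

lemma congestion_trails:
  assumes "0 < n" "\<forall>i<a. xs i \<in> D"
    and inj: "inj_on (\<lambda>(i, t). (h ^^ t) (xs i)) ({..<a} \<times> {..<n})"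
    and load: "\<forall>v. card {z\<in>D. v \<in> set (route z)} \<le> c"
  shows "congestion_le a (\<lambda>i. trail (xs i) n) c"
  unfolding congestion_le_def
proof
  fix v
  define g where "g z = count_list (route z) v" for z
  have "(\<Sum>i<a. count_list (trail (xs i) n) v) \<le> (\<Sum>i<a. \<Sum>t<n. g ((h ^^ t) (xs i)))"
    using count_list_trail[of _ "n - 1"] assms(1,2) by (intro sum_mono) (simp add: g_def)
  also have "\<dots> = (\<Sum>(i, t)\<in>{..<a} \<times> {..<n}. g ((h ^^ t) (xs i)))"
    by (rule sum.cartesian_product)
  also have "\<dots> = (\<Sum>z\<in>(\<lambda>(i, t). (h ^^ t) (xs i)) ` ({..<a} \<times> {..<n}). g z)"
    by (subst sum.reindex[OF inj]) (simp add: comp_def case_prod_unfold)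
  also have "\<dots> \<le> (\<Sum>z\<in>D. g z)"
    by (rule sum_mono2[OF finite_D]) (use funpow_h_in_D assms(2) in auto)
  also have "\<dots> \<le> (\<Sum>z\<in>D. of_bool (v \<in> set (route z)))"
  proof (rule sum_mono)
    fix z assume "z \<in> D"
    then show "g z \<le> of_bool (v \<in> set (route z))"
      using count_list_route_le_1 by (cases "v \<in> set (route z)") (simp_all add: g_def)
  qed
  also have "\<dots> = card (D \<inter> {z. v \<in> set (route z)})"
    using finite_D by simp
  also have "\<dots> = card {z\<in>D. v \<in> set (route z)}"
    by (simp add: Collect_conj_eq)
  also have "\<dots> \<le> c" using load by blast
  finally show "(\<Sum>i<a. count_list (trail (xs i) n) v) \<le> c" .
qed

lemma walks_along_segments:
  assumes "0 < b" "\<forall>i<a. xs i \<in> D"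
    and inj: "inj_on (\<lambda>(i, t). (h ^^ t) (xs i)) ({..<a} \<times> {..<2 * b})"
    and load: "\<forall>v. card {z\<in>D. v \<in> set (route z)} \<le> c"
    and "well_linked V E D"
  shows "\<exists>P A B.
           (\<forall>i<a. is_walk V E (P i) \<and> A i \<subseteq> set (P i) \<and> B i \<subseteq> set (P i)) \<and>
           congestion_le a P c \<and>
           (\<forall>i<a. card (A i) = b \<and> card (B i) = b) \<and>
           (\<forall>i<a. \<forall>j<a. A i \<inter> B j = {} \<and> (i \<noteq> j \<longrightarrow> A i \<inter> A j = {} \<and> B i \<inter> B j = {})) \<and>
           (\<forall>i<a. \<exists>n. A i \<subseteq> set (take n (P i)) \<and> B i \<subseteq> set (drop n (P i))) \<and>
           well_linked V E (\<Union>i<a. A i \<union> B i)"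
proof -
  define f where "f i t = (h ^^ t) (xs i)" for i t
  define P where "P i = trail (xs i) (b + (b - 1))" for i
  define A where "A i = f i ` {..<b}" for i
  define B where "B i = f i ` {b..<2 * b}" for i
  have "{b..b + (b - 1)} = {b..<2 * b}" using assms(1) by auto
  then have "\<exists>n. A i \<subseteq> set (take n (P i)) \<and> B i \<subseteq> set (drop n (P i))" if "i < a" for i
    using trail_split[of "xs i" b "b - 1"] assms(2) that by (simp add: P_def A_def B_def f_def)
  then have order: "\<forall>i<a. \<exists>n. A i \<subseteq> set (take n (P i)) \<and> B i \<subseteq> set (drop n (P i))"
    by blast
  have "\<forall>i<a. is_walk V E (P i) \<and> A i \<subseteq> set (P i) \<and> B i \<subseteq> set (P i)"
    using order walk_trail assms(2) unfolding P_def by (meson set_drop_subset set_take_subset subset_trans)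
  moreover have "congestion_le a P c"
    unfolding P_def using assms(1,2) load by (intro congestion_trails inj_on_subset[OF inj]) auto
  moreover have "\<forall>i<a. card (A i) = b \<and> card (B i) = b"
    using segment_halves(1,2)[of f] inj by (simp add: A_def B_def f_def)
  moreover have "\<forall>i<a. \<forall>j<a. A i \<inter> B j = {} \<and> (i \<noteq> j \<longrightarrow> A i \<inter> A j = {} \<and> B i \<inter> B j = {})"
    using segment_halves(3-5)[of f] inj by (simp add: A_def B_def f_def)
  moreover have "(\<Union>i<a. A i \<union> B i) \<subseteq> D"
    using funpow_h_in_D assms(2) by (auto simp: A_def B_def f_def)
  then have "well_linked V E (\<Union>i<a. A i \<union> B i)"
    using assms(5) well_linked_subset by blast
  ultimately show ?thesis using order by blast
qed

lemma permutation_h: "permutation h"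
  using finite_D h_permutes permutation_permutes by blast

lemma cycle_in_orbit:
  assumes "x \<in> D"
  shows "\<exists>C. is_cycle E C \<and> cycle_verts C \<subseteq> (\<Union>z\<in>orbit h x. set (route z))"
proof (rule cycle_in_out_closed_set)
  have orbit_D: "orbit h x \<subseteq> D"
    using h_permutes assms by (rule permutes_orbit_subset)
  then show "finite (\<Union>z\<in>orbit h x. set (route z))"
    using finite_D finite_subset by blast
  have "x \<in> (\<Union>z\<in>orbit h x. set (route z))"
    using permutation_self_in_orbit[OF permutation_h] in_set_butlastD[OF hd_in_butlast_route[OF assms]]
    by (rule UN_I)
  then show "(\<Union>z\<in>orbit h x. set (route z)) \<noteq> {}" by blast
  show "\<forall>u\<in>\<Union>z\<in>orbit h x. set (route z). \<exists>w\<in>\<Union>z\<in>orbit h x. set (route z). (u, w) \<in> E"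
  proof clarify
    fix z u assume z: "z \<in> orbit h x" and u: "u \<in> set (route z)"
    have zD: "z \<in> D" using z orbit_D by blast
    show "\<exists>w\<in>\<Union>z\<in>orbit h x. set (route z). (u, w) \<in> E"
    proof (cases "u = last (route z)")
      case False
      then show ?thesis using walk_out_neighbour[OF walk_route[OF zD] u] z by blast
    next
      case True
      then have "u = h z" "h z \<in> orbit h x" "h z \<in> D"
        using last_route[OF zD] z h_in_D[OF zD] by (auto intro: orbit.step)
      moreover have "u \<in> set (route u)"
        using hd_in_butlast_route[OF \<open>h z \<in> D\<close>] \<open>u = h z\<close> by (auto dest: in_set_butlastD)
      moreover have "u \<noteq> last (route u)"
        using last_route[OF \<open>h z \<in> D\<close>] h_no_fixpoint[OF \<open>h z \<in> D\<close>] \<open>u = h z\<close> by simp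
      ultimately obtain w where "w \<in> set (route u)" "(u, w) \<in> E"
        using walk_out_neighbour[OF walk_route] by blast
      then show ?thesis using \<open>h z \<in> orbit h x\<close> \<open>u = h z\<close> by blast
    qed
  qed
qed

lemma cycle_packing_if_many_orbits:
  assumes load: "\<forall>v. card {z\<in>D. v \<in> set (route z)} \<le> 2"
    and "2 * k \<le> card (orbit h ` D)"
  shows "has_half_integral_cycle_packing V E k"
proof (rule has_half_integral_cycle_packingI[where U = "\<lambda>Orb. \<Union>z\<in>Orb. set (route z)"])
  show "finite (orbit h ` D)" using finite_D by simp
  show "2 * k \<le> card (orbit h ` D)" by fact
  show "\<forall>Orb\<in>orbit h ` D. \<exists>C. is_cycle E C \<and> cycle_verts C \<subseteq> (\<Union>z\<in>Orb. set (route z))"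
    using cycle_in_orbit by blast
  show "\<forall>v. card {Orb \<in> orbit h ` D. v \<in> (\<Union>z\<in>Orb. set (route z))} \<le> 2"
  proof
    fix v
    have "{Orb \<in> orbit h ` D. v \<in> (\<Union>z\<in>Orb. set (route z))} \<subseteq> orbit h ` {z\<in>D. v \<in> set (route z)}"
    proof clarify
      fix x z assume "x \<in> D" "z \<in> orbit h x" "v \<in> set (route z)"
      moreover have "orbit h z = orbit h x"
        using orbit_cyclic_eq3[OF cyclic_on_orbit'[OF permutation_h]] \<open>z \<in> orbit h x\<close> by blast
      moreover have "z \<in> D" using permutes_orbit_subset[OF h_permutes \<open>x \<in> D\<close>] \<open>z \<in> orbit h x\<close> by blast
      ultimately show "orbit h x \<in> orbit h ` {z\<in>D. v \<in> set (route z)}" by blast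
    qed
    then have "card {Orb \<in> orbit h ` D. v \<in> (\<Union>z\<in>Orb. set (route z))}
        \<le> card (orbit h ` {z\<in>D. v \<in> set (route z)})"
      by (rule card_mono[rotated]) (use finite_D in simp)
    also have "\<dots> \<le> card {z\<in>D. v \<in> set (route z)}"
      by (rule card_image_le) (use finite_D in simp)
    finally show "card {Orb \<in> orbit h ` D. v \<in> (\<Union>z\<in>Orb. set (route z))} \<le> 2"
      using load le_trans by blast
  qed
qed

end

lemma path_routing_of_opposite_linkages:
  assumes "finite D" "X \<subseteq> D" "Y = D - X"
    and p: "\<forall>x\<in>X. is_path V E (p x) \<and> hd (p x) = x"
      "\<forall>x\<in>X. \<forall>y\<in>X. x \<noteq> y \<longrightarrow> set (p x) \<inter> set (p y) = {}" "bij_betw (\<lambda>x. last (p x)) X Y"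
    and q: "\<forall>y\<in>Y. is_path V E (q y) \<and> hd (q y) = y"
      "\<forall>x\<in>Y. \<forall>y\<in>Y. x \<noteq> y \<longrightarrow> set (q x) \<inter> set (q y) = {}" "bij_betw (\<lambda>y. last (q y)) Y X"
  defines "route z \<equiv> if z \<in> X then p z else q z"
    and "h z \<equiv> if z \<in> X then last (p z) else if z \<in> Y then last (q z) else z"
  shows "path_routing V E D route h" "card {z\<in>D. v \<in> set (route z)} \<le> 2"
proof -
  have "bij_betw h X Y"
    by (rule bij_betw_cong[THEN iffD1, OF _ p(3)]) (simp add: h_def)
  moreover have "bij_betw h Y X"
    by (rule bij_betw_cong[THEN iffD1, OF _ q(3)]) (auto simp: assms(3) h_def)
  ultimately have "bij_betw h (X \<union> Y) (Y \<union> X)"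
    by (rule bij_betw_combine) (auto simp: assms(3))
  moreover have "X \<union> Y = D" "Y \<union> X = D" using assms(2,3) by auto
  ultimately have "h permutes D"
    by (intro bij_imp_permutes) (auto simp: assms(3) h_def)
  moreover have "h z \<noteq> z" if "z \<in> D" for z
    using that bij_betwE[OF p(3)] bij_betwE[OF q(3)]
    by (cases "z \<in> X") (force simp: assms(3) h_def)+
  ultimately show "path_routing V E D route h"
    using assms(1,3) p(1) q(1) by unfold_locales (auto simp: h_def route_def)
  have fin: "finite X" "finite Y" using assms(1-3) finite_subset by auto
  have "{z\<in>D. v \<in> set (route z)} \<subseteq> {x\<in>X. v \<in> set (p x)} \<union> {y\<in>Y. v \<in> set (q y)}"
    by (auto simp: assms(3) route_def)
  then have "card {z\<in>D. v \<in> set (route z)} \<le> card ({x\<in>X. v \<in> set (p x)} \<union> {y\<in>Y. v \<in> set (q y)})"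
    by (rule card_mono[rotated]) (use fin in simp)
  also have "\<dots> \<le> card {x\<in>X. v \<in> set (p x)} + card {y\<in>Y. v \<in> set (q y)}"
    by (rule card_Un_le)
  also have "\<dots> \<le> 2"
    using card_disjoint_sets_containing_le_1[OF fin(1) p(2), of v]
      card_disjoint_sets_containing_le_1[OF fin(2) q(2), of v] by simp
  finally show "card {z\<in>D. v \<in> set (route z)} \<le> 2" .
qed

lemma well_linked_path_routing:
  assumes "digraph V E" "well_linked V E D" "even (card D)"
  obtains route h where "path_routing V E D route h"
    "\<forall>v. card {z\<in>D. v \<in> set (route z)} \<le> 2"
proof -
  have fin_D: "finite D"
    using assms(1,2) finite_subset by (auto simp: digraph_def well_linked_def)
  obtain X where X: "X \<subseteq> D" "card X = card D div 2"
    by (meson obtain_subset_with_card_n div_le_dividend)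
  define Y where "Y = D - X"
  have fin: "finite X" "finite Y" using X(1) fin_D finite_subset by (auto simp: Y_def)
  have card_Y: "card Y = card X"
    using card_Diff_subset[OF fin(1) X(1)] X(2) assms(3) by (auto simp: Y_def)
  have link: "linkage_in V E {} A B" if "A \<subseteq> D" "B \<subseteq> D" "A \<union> B = D" "card A = card B" for A B
  proof -
    have "linkage_in V E (D - (A \<union> B)) A B"
      using assms(2) that unfolding well_linked_def by blast
    then show ?thesis using that(3) by simp
  qed
  have XY: "X \<union> Y = D" "Y \<union> X = D" using X(1) by (auto simp: Y_def)
  obtain p where p: "\<forall>x\<in>X. is_path V E (p x) \<and> hd (p x) = x"
      "\<forall>x\<in>X. \<forall>y\<in>X. x \<noteq> y \<longrightarrow> set (p x) \<inter> set (p y) = {}" "bij_betw (\<lambda>x. last (p x)) X Y"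
    using linkage_in_paths[OF link[OF X(1) _ XY(1) card_Y[symmetric]] fin card_Y[symmetric]]
    by (auto simp: Y_def)
  obtain q where q: "\<forall>y\<in>Y. is_path V E (q y) \<and> hd (q y) = y"
      "\<forall>x\<in>Y. \<forall>y\<in>Y. x \<noteq> y \<longrightarrow> set (q x) \<inter> set (q y) = {}" "bij_betw (\<lambda>y. last (q y)) Y X"
    using linkage_in_paths[OF link[OF _ X(1) XY(2) card_Y] fin(2,1) card_Y]
    by (auto simp: Y_def)
  note routing = path_routing_of_opposite_linkages[OF fin_D X(1) Y_def p q]
  show thesis
    by (rule that[OF routing(1)]) (use routing(2) in blast)
qed

theorem lemma15:
  fixes V :: "'v set" and E :: "('v \<times> 'v) set" and a b k :: nat and D :: "'v set"
  assumes "digraph V E"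
    and "a \<ge> 1" and "b \<ge> 1" and "k \<ge> 1"
    and "well_linked V E D" and "card D = 4 * (a + k) * b"
    and "\<not> has_half_integral_cycle_packing V E k"
  shows "\<exists>(P :: nat \<Rightarrow> 'v list) (A :: nat \<Rightarrow> 'v set) (B :: nat \<Rightarrow> 'v set).
           (\<forall>i<a. is_walk V E (P i) \<and> A i \<subseteq> set (P i) \<and> B i \<subseteq> set (P i)) \<and>
           congestion_le a P 2 \<and>
           (\<forall>i<a. card (A i) = b \<and> card (B i) = b) \<and>
           (\<forall>i<a. \<forall>j<a. A i \<inter> B j = {} \<and>
              (i \<noteq> j \<longrightarrow> A i \<inter> A j = {} \<and> B i \<inter> B j = {})) \<and>
           (\<forall>i<a. \<exists>n. A i \<subseteq> set (take n (P i)) \<and> B i \<subseteq> set (drop n (P i))) \<and>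
           well_linked V E (\<Union>i<a. A i \<union> B i)"
proof -
  obtain route h where routing: "path_routing V E D route h"
    and load: "\<forall>v. card {z\<in>D. v \<in> set (route z)} \<le> 2"
    using well_linked_path_routing[OF assms(1,5)] assms(6) by auto
  interpret path_routing V E D route h by (rule routing)
  obtain c xs where xs: "\<forall>i<c. xs i \<in> D" "inj_on (\<lambda>(i, t). (h ^^ t) (xs i)) ({..<c} \<times> {..<2 * b})"
      "card D \<le> (c + card (orbit h ` D)) * (2 * b)"
    using permutes_orbit_segments[OF h_permutes finite_D, of "2 * b"] assms(3) by auto
  have "card (orbit h ` D) < 2 * k"
    using cycle_packing_if_many_orbits[OF load] assms(7) by (meson not_le)
  moreover have "2 * (a + k) * (2 * b) \<le> (c + card (orbit h ` D)) * (2 * b)"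
    using xs(3) assms(6) by (simp add: algebra_simps)
  ultimately have "a \<le> c" using assms(3) by simp
  then have "inj_on (\<lambda>(i, t). (h ^^ t) (xs i)) ({..<a} \<times> {..<2 * b})" "\<forall>i<a. xs i \<in> D"
    using xs(1) by (auto intro: inj_on_subset[OF xs(2)])
  then show ?thesis
    using walks_along_segments[of b a xs 2] load assms(3,5) by simp
qed

end
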